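(* Let $n$ be even, and for $m\ge1$ let $\mathcal{C}_m=\mathbb{C}\{e_1,\dots,e_m\}$ denote the complex Clifford algebra with generators satisfying $e_j^2=-1$, $e_je_k=-e_ke_j$ ($j\ne k$), of dimension $2^m$, with $\mathcal{C}_n\subset\mathcal{C}_{n+2}$ naturally. Suppose there is an invertible $2^{n/2}\times2^{n/2}$ matrix $P_n$ over $\mathcal{C}_n$, not depending on $a$, such that for every $a\in\mathcal{C}_n$ the matrix $\phi_n(a):=P_n(aI_{2^{n/2}})P_n^{-1}$ has all entries in $\mathbb{C}$. Let $e_{[n]}=e_1\cdots e_n$, $e_{[n+1]}=e_1\cdots e_{n+1}=e_{[n]}e_{n+1}$, $\mu_{n+2}=(e_{[n]}e_{n+1})(e_{[n]}e_{n+2})$ and $r=(-1)^{\frac12(n+1)(n+2)}$; then $(e_{[n]}e_{n+1})^2=(e_{[n]}e_{n+2})^2=r$ and $\mu_{n+2}=-(e_{[n]}e_{n+2})(e_{[n]}e_{n+1})$. Fix a square root $\sqrt r\in\mathbb{C}$. Then every $a\in\mathcal{C}_{n+2}$ can be written as $$a=a_0+a_1e_{[n]}e_{n+1}+a_2e_{[n]}e_{n+2}+a_3\mu_{n+2}$$ with $a_0,\dots,a_3\in\mathcal{C}_n$. Let $N=2^{(n+2)/2}$ and $$P_{n+2}=\frac12\begin{pmatrix}(1+\frac1{\sqrt r}e_{[n+1]})P_n & (e_{[n]}e_{n+2}-\frac1{\sqrt r}\mu_{n+2})P_n\\ \frac1r(e_{[n]}e_{n+2}+\frac1{\sqrt r}\mu_{n+2})P_n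 & (1-\frac1{\sqrt r}e_{[n+1]})P_n\end{pmatrix},$$ $$P_{n+2}'=\frac12\begin{pmatrix}P_n^{-1}(1+\frac1{\sqrt r}e_{[n+1]}) & P_n^{-1}(e_{[n]}e_{n+2}-\frac1{\sqrt r}\mu_{n+2})\\ P_n^{-1}\frac1r(e_{[n]}e_{n+2}+\frac1{\sqrt r}\mu_{n+2}) & P_n^{-1}(1-\frac1{\sqrt r}e_{[n+1]})\end{pmatrix}.$$ Then $P_{n+2}$ is invertible with $P_{n+2}^{-1}=P_{n+2}'$, and $$P_{n+2}(aI_N)P_{n+2}^{-1}=\begin{pmatrix}\phi_n(a_0)+\sqrt r\,\phi_n(a_1) & r[\phi_n(a_2)+\sqrt r\,\phi_n(a_3)]\\ \phi_n(a_2)-\sqrt r\,\phi_n(a_3) & \phi_n(a_0)-\sqrt r\,\phi_n(a_1)\end{pmatrix}\in\mathbb{C}^{N\times N}.$$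
   Context: For an element $c$ and a matrix $M$, $cM$ (resp. $Mc$) denotes the matrix with entries $cM_{jk}$ (resp. $M_{jk}c$). Complex scalars commute with all Clifford elements. *)

theory Defs
  imports Complex_Main
begin

text \<open>An element is a complex-valued function on finite sets of indices
(basis blades): the blade A = {a1 < ... < ak} stands for e_a1 e_a2 ... e_ak.\<close>

type_synonym cl = "nat set \<Rightarrow> complex"

definition in_C :: "nat \<Rightarrow> cl \<Rightarrow> bool" where
  "in_C m a \<longleftrightarrow> (\<forall>A. a A \<noteq> 0 \<longrightarrow> A \<subseteq> {1..m})"

definition cl_scalar :: "complex \<Rightarrow> cl" where
  "cl_scalar c = (\<lambda>A. if A = {} then c else 0)"

definition cl_is_scalar :: "cl \<Rightarrow> bool" where
  "cl_is_scalar x \<longleftrightarrow> (\<forall>A. A \<noteq> {} \<longrightarrow> x A = 0)"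

definition cl_gen :: "nat \<Rightarrow> cl" where
  "cl_gen j = (\<lambda>A. if A = {j} then 1 else 0)"

definition cl_add :: "cl \<Rightarrow> cl \<Rightarrow> cl" where
  "cl_add a b = (\<lambda>A. a A + b A)"

definition cl_sub :: "cl \<Rightarrow> cl \<Rightarrow> cl" where
  "cl_sub a b = (\<lambda>A. a A - b A)"

definition cl_smul :: "complex \<Rightarrow> cl \<Rightarrow> cl" where
  "cl_smul c a = (\<lambda>A. c * a A)"

text \<open>Sign of the product of blades e_A e_B (using e_j^2 = -1 and
anticommutation of distinct generators).\<close>
definition bsign :: "nat set \<Rightarrow> nat set \<Rightarrow> complex" where
  "bsign A B = (-1) ^ (card {(i, j). i \<in> A \<and> j \<in> B \<and> j < i} + card (A \<inter> B))"

definition cl_mult :: "cl \<Rightarrow> cl \<Rightarrow> cl" where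
  "cl_mult a b = (\<lambda>C. \<Sum>A\<in>{A. a A \<noteq> 0}. \<Sum>B\<in>{B. b B \<noteq> 0}.
      if (A - B) \<union> (B - A) = C then bsign A B * a A * b B else 0)"

fun ebar :: "nat \<Rightarrow> cl" where
  "ebar 0 = cl_scalar 1"
| "ebar (Suc k) = cl_mult (ebar k) (cl_gen (Suc k))"

definition E1 :: "nat \<Rightarrow> cl" where "E1 n = cl_mult (ebar n) (cl_gen (n + 1))"
definition E2 :: "nat \<Rightarrow> cl" where "E2 n = cl_mult (ebar n) (cl_gen (n + 2))"
definition mu :: "nat \<Rightarrow> cl" where "mu n = cl_mult (E1 n) (E2 n)"

type_synonym clmat = "nat \<Rightarrow> nat \<Rightarrow> cl"

definition mmul :: "nat \<Rightarrow> clmat \<Rightarrow> clmat \<Rightarrow> clmat" where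
  "mmul d M N = (\<lambda>i k. (\<lambda>A. \<Sum>j<d. cl_mult (M i j) (N j k) A))"

definition mdiag :: "cl \<Rightarrow> clmat" where
  "mdiag a = (\<lambda>i j. if i = j then a else cl_scalar 0)"

definition meq :: "nat \<Rightarrow> clmat \<Rightarrow> clmat \<Rightarrow> bool" where
  "meq d M N \<longleftrightarrow> (\<forall>i<d. \<forall>j<d. M i j = N i j)"

definition mat_in_C :: "nat \<Rightarrow> nat \<Rightarrow> clmat \<Rightarrow> bool" where
  "mat_in_C m d M \<longleftrightarrow> (\<forall>i<d. \<forall>j<d. in_C m (M i j))"

definition mat_scalar :: "nat \<Rightarrow> clmat \<Rightarrow> bool" where
  "mat_scalar d M \<longleftrightarrow> (\<forall>i<d. \<forall>j<d. cl_is_scalar (M i j))"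

definition is_inverse :: "nat \<Rightarrow> clmat \<Rightarrow> clmat \<Rightarrow> bool" where
  "is_inverse d P Q \<longleftrightarrow> meq d (mmul d P Q) (mdiag (cl_scalar 1)) \<and> meq d (mmul d Q P) (mdiag (cl_scalar 1))"

definition madd :: "clmat \<Rightarrow> clmat \<Rightarrow> clmat" where
  "madd M N = (\<lambda>i j. cl_add (M i j) (N i j))"
definition msub :: "clmat \<Rightarrow> clmat \<Rightarrow> clmat" where
  "msub M N = (\<lambda>i j. cl_sub (M i j) (N i j))"
definition msmul :: "complex \<Rightarrow> clmat \<Rightarrow> clmat" where
  "msmul c M = (\<lambda>i j. cl_smul c (M i j))"
definition mlmul :: "cl \<Rightarrow> clmat \<Rightarrow> clmat" where
  "mlmul x M = (\<lambda>i j. cl_mult x (M i j))"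
definition mrmul :: "clmat \<Rightarrow> cl \<Rightarrow> clmat" where
  "mrmul M x = (\<lambda>i j. cl_mult (M i j) x)"

definition blk :: "nat \<Rightarrow> clmat \<Rightarrow> clmat \<Rightarrow> clmat \<Rightarrow> clmat \<Rightarrow> clmat" where
  "blk d A B C D = (\<lambda>i j. if i < d then (if j < d then A i j else B i (j - d))
                              else (if j < d then C (i - d) j else D (i - d) (j - d)))"

text \<open>P_(n+2), with s a square root of r, P = P_n of size d.\<close>
definition Pnext :: "nat \<Rightarrow> complex \<Rightarrow> complex \<Rightarrow> nat \<Rightarrow> clmat \<Rightarrow> clmat" where
  "Pnext n r s d P = msmul (1/2) (blk d
     (mlmul (cl_add (cl_scalar 1) (cl_smul (1/s) (ebar (Suc n)))) P)
     (mlmul (cl_sub (E2 n) (cl_smul (1/s) (mu n))) P)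
     (mlmul (cl_smul (1/r) (cl_add (E2 n) (cl_smul (1/s) (mu n)))) P)
     (mlmul (cl_sub (cl_scalar 1) (cl_smul (1/s) (ebar (Suc n)))) P))"

text \<open>P'_(n+2), with Q = P_n^(-1).\<close>
definition Pnext' :: "nat \<Rightarrow> complex \<Rightarrow> complex \<Rightarrow> nat \<Rightarrow> clmat \<Rightarrow> clmat" where
  "Pnext' n r s d Q = msmul (1/2) (blk d
     (mrmul Q (cl_add (cl_scalar 1) (cl_smul (1/s) (ebar (Suc n)))))
     (mrmul Q (cl_sub (E2 n) (cl_smul (1/s) (mu n))))
     (mrmul Q (cl_smul (1/r) (cl_add (E2 n) (cl_smul (1/s) (mu n)))))
     (mrmul Q (cl_sub (cl_scalar 1) (cl_smul (1/s) (ebar (Suc n))))))"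

definition phi :: "nat \<Rightarrow> clmat \<Rightarrow> clmat \<Rightarrow> cl \<Rightarrow> clmat" where
  "phi d P Q a = mmul d (mmul d P (mdiag a)) Q"

end

(*
  Blades multiply by e_A e_B = bsign A B e_(A - B \<union> B - A), and bsign is multiplicative in
  each argument with respect to symmetric difference; this cocycle property makes the finitely
  supported elements an associative ring. For even n, E1 = e_[n] e_(n+1) and E2 = e_[n] e_(n+2)
  are blades of odd grade n + 1 containing {1..n}, so they commute with C_n, square to r and
  anticommute, and C_(n+2) = C_n + C_n E1 + C_n E2 + C_n E1 E2.

  Blockwise, P_(n+2) = X P_n and P'_(n+2) = P_n^-1 X for a 2 x 2 matrix X over the quaternion
  algebra spanned by 1, E1, E2, E1 E2, whose entries commute with those of P_n and P_n^-1.
  Conjugating a = a0 + a1 E1 + a2 E2 + a3 E1 E2 therefore reduces to the identity X g X = M(g) for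
  g = phi_n(a0) + phi_n(a1) E1 + phi_n(a2) E2 + phi_n(a3) E1 E2 with complex coefficients, where
  M(g) is the claimed block matrix; a = 1 gives invertibility.
*)

theory Submission
  imports Defs
begin

section \<open>Signs of blade products\<close>

definition inversions :: "nat set \<Rightarrow> nat set \<Rightarrow> (nat \<times> nat) set" where
  "inversions A B = {(i, j). i \<in> A \<and> j \<in> B \<and> j < i}"

lemma finite_inversions: "finite A \<Longrightarrow> finite B \<Longrightarrow> finite (inversions A B)"
  by (rule finite_subset[of _ "A \<times> B"]) (auto simp: inversions_def)

lemma bsign_eq: "bsign A B = (-1) ^ card (inversions A B) * (-1) ^ card (A \<inter> B)"
  unfolding bsign_def inversions_def by (simp add: power_add)

lemma neg_one_power_card_sym_diff:
  assumes "finite S" "finite T"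
  shows "(-1::complex) ^ card (sym_diff S T) = (-1) ^ card S * (-1) ^ card T"
proof -
  have "sym_diff S T = (S \<union> T) - (S \<inter> T)" and "(S \<union> T) \<inter> (S \<inter> T) = S \<inter> T" by blast+
  then have "card (S \<union> T) = card (sym_diff S T) + card (S \<inter> T)"
    using card_Int_Diff[of "S \<union> T" "S \<inter> T"] assms by simp
  then have "card S + card T = card (sym_diff S T) + 2 * card (S \<inter> T)"
    using card_Un_Int[OF assms] by simp
  then have "(-1::complex) ^ card S * (-1) ^ card T = (-1) ^ card (sym_diff S T) * ((-1) ^ 2) ^ card (S \<inter> T)"
    by (simp only: power_add [symmetric] power_mult [symmetric])
  then show ?thesis by simp
qed

lemma bsign_sym_diff_left:
  assumes "finite A" "finite B" "finite C"
  shows "bsign (sym_diff A B) C = bsign A C * bsign B C"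
proof -
  have "inversions (sym_diff A B) C = sym_diff (inversions A C) (inversions B C)"
    and "sym_diff A B \<inter> C = sym_diff (A \<inter> C) (B \<inter> C)"
    unfolding inversions_def by auto
  then show ?thesis
    unfolding bsign_eq using assms by (simp add: neg_one_power_card_sym_diff finite_inversions)
qed

lemma bsign_sym_diff_right:
  assumes "finite A" "finite B" "finite C"
  shows "bsign A (sym_diff B C) = bsign A B * bsign A C"
proof -
  have "inversions A (sym_diff B C) = sym_diff (inversions A B) (inversions A C)"
    and "A \<inter> sym_diff B C = sym_diff (A \<inter> B) (A \<inter> C)"
    unfolding inversions_def by auto
  then show ?thesis
    unfolding bsign_eq using assms by (simp add: neg_one_power_card_sym_diff finite_inversions)
qed

lemma bsign_square: "bsign A B * bsign A B = 1"
  unfolding bsign_def by (simp flip: power_add add: power_even_eq[symmetric] mult_2[symmetric])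

lemma bsign_nonzero: "bsign A B \<noteq> 0"
  using bsign_square[of A B] by auto

lemma card_inversions_both_ways:
  assumes "finite A" "finite B"
  shows "card (inversions A B) + card (inversions B A) + card (A \<inter> B) = card A * card B"
proof -
  let ?G = "{(i, j). i \<in> A \<and> j \<in> B \<and> i < j}" and ?D = "{(i, j). i \<in> A \<and> j \<in> B \<and> i = j}"
  have fin: "finite (A \<times> B)" using assms by simp
  have "card (A \<times> B) = card (inversions A B) + card ?G + card ?D"
  proof -
    have "A \<times> B = inversions A B \<union> ?G \<union> ?D" unfolding inversions_def by auto
    moreover have "finite (inversions A B)" "finite ?G" "finite ?D"
      by (auto intro: finite_subset[OF _ fin] simp: inversions_def)
    ultimately show ?thesis
      by (simp add: card_Un_disjoint inversions_def disjoint_iff)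
  qed
  moreover have "?G = prod.swap ` inversions B A" unfolding inversions_def by auto
  then have "card ?G = card (inversions B A)" by (simp add: card_image)
  moreover have "?D = (\<lambda>i. (i, i)) ` (A \<inter> B)" by auto
  then have "card ?D = card (A \<inter> B)" by (simp add: card_image inj_on_def)
  ultimately show ?thesis by (simp add: card_cartesian_product)
qed

lemma bsign_swap:
  assumes "finite A" "finite B"
  shows "bsign A B * bsign B A = (-1) ^ (card A * card B + card (A \<inter> B))"
proof -
  have "bsign A B * bsign B A
      = (-1) ^ (card (inversions A B) + card (inversions B A) + card (A \<inter> B) + card (A \<inter> B))"
    unfolding bsign_eq by (simp add: power_add Int_commute)
  then show ?thesis using card_inversions_both_ways[OF assms] by simp
qed

lemma bsign_self:
  assumes "finite S"
  shows "bsign S S = (-1) ^ (card S * (card S + 1) div 2)"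
proof -
  have "2 * (card (inversions S S) + card S) = card S * (card S + 1)"
    using card_inversions_both_ways[OF assms assms] by (simp add: algebra_simps)
  then have "card (inversions S S) + card S = card S * (card S + 1) div 2" by simp
  then show ?thesis unfolding bsign_def inversions_def by simp
qed

section \<open>The Clifford product on finitely supported elements\<close>

definition supported_on :: "nat set \<Rightarrow> cl \<Rightarrow> bool" where
  "supported_on K a \<longleftrightarrow> (\<forall>A. a A \<noteq> 0 \<longrightarrow> A \<subseteq> K)"

lemma in_C_iff_supported_on: "in_C m a \<longleftrightarrow> supported_on {1..m} a"
  unfolding in_C_def supported_on_def by simp

lemma supported_on_mono: "supported_on K a \<Longrightarrow> K \<subseteq> L \<Longrightarrow> supported_on L a"
  unfolding supported_on_def by blast

lemma cl_mult_supported_on: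
  assumes K: "finite K" and a: "supported_on K a" and b: "supported_on K b"
  shows "cl_mult a b C = (\<Sum>A\<in>Pow K. bsign A (sym_diff A C) * a A * b (sym_diff A C))"
proof -
  have fin_b: "finite {B. b B \<noteq> 0}"
    using b K unfolding supported_on_def by (auto intro: finite_subset[of _ "Pow K"])
  have "(\<Sum>B\<in>{B. b B \<noteq> 0}. if sym_diff A B = C then bsign A B * a A * b B else 0)
      = bsign A (sym_diff A C) * a A * b (sym_diff A C)" for A
  proof -
    have "(\<Sum>B\<in>{B. b B \<noteq> 0}. if sym_diff A B = C then bsign A B * a A * b B else 0)
        = (\<Sum>B\<in>{B. b B \<noteq> 0}. if B = sym_diff A C then bsign A B * a A * b B else 0)"
      by (rule sum.cong) auto
    then show ?thesis using fin_b by simp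
  qed
  then have "cl_mult a b C = (\<Sum>A\<in>{A. a A \<noteq> 0}. bsign A (sym_diff A C) * a A * b (sym_diff A C))"
    unfolding cl_mult_def by simp
  also have "\<dots> = (\<Sum>A\<in>Pow K. bsign A (sym_diff A C) * a A * b (sym_diff A C))"
    using a K unfolding supported_on_def by (intro sum.mono_neutral_left) auto
  finally show ?thesis .
qed

lemma cl_mult_cl_smul_left: "cl_mult (cl_smul c x) y = cl_smul c (cl_mult x y)"
  by (cases "c = 0") (auto simp: cl_mult_def cl_smul_def sum_distrib_left fun_eq_iff intro!: sum.cong)

lemma cl_mult_cl_smul_right: "cl_mult x (cl_smul c y) = cl_smul c (cl_mult x y)"
  by (cases "c = 0") (auto simp: cl_mult_def cl_smul_def sum_distrib_left fun_eq_iff intro!: sum.cong)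

lemma supported_on_cl_mult:
  assumes "finite K" "supported_on K a" "supported_on K b"
  shows "supported_on K (cl_mult a b)"
  unfolding supported_on_def
proof (intro allI impI)
  fix C assume nonzero: "cl_mult a b C \<noteq> 0"
  show "C \<subseteq> K"
  proof (rule ccontr)
    assume "\<not> C \<subseteq> K"
    then have "\<forall>A\<in>Pow K. b (sym_diff A C) = 0"
      using assms(3) unfolding supported_on_def by blast
    then show False using nonzero by (simp add: cl_mult_supported_on[OF assms])
  qed
qed

definition finitely_supported :: "cl \<Rightarrow> bool" where
  "finitely_supported a \<longleftrightarrow> (\<exists>K. finite K \<and> supported_on K a)"

lemma finitely_supportedI: "finite K \<Longrightarrow> supported_on K a \<Longrightarrow> finitely_supported a"
  unfolding finitely_supported_def by blast

lemma finitely_supported_common_support: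
  assumes "finitely_supported a" "finitely_supported b" "finitely_supported c"
  obtains K where "finite K" "supported_on K a" "supported_on K b" "supported_on K c"
proof -
  obtain Ka Kb Kc where "finite Ka" "supported_on Ka a" "finite Kb" "supported_on Kb b"
      "finite Kc" "supported_on Kc c"
    using assms unfolding finitely_supported_def by blast
  then show ?thesis
    using that[of "Ka \<union> Kb \<union> Kc"] supported_on_mono[of _ _ "Ka \<union> Kb \<union> Kc"] by blast
qed

lemma sym_diff_sym_diff_cancel: "sym_diff A (sym_diff A B) = B"
  by blast

lemma sum_Pow_reindex_sym_diff:
  assumes "A \<subseteq> K"
  shows "(\<Sum>D\<in>Pow K. f D) = (\<Sum>B\<in>Pow K. f (sym_diff A B))"
proof -
  have "bij_betw (sym_diff A) (Pow K) (Pow K)"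
    using assms by (intro bij_betw_byWitness[where f' = "sym_diff A"]) auto
  then show ?thesis by (rule sum.reindex_bij_betw[symmetric])
qed

text \<open>Associativity of the product amounts to the cocycle identity
  \<open>bsign (sym_diff A B) X * bsign A B = bsign A (sym_diff B X) * bsign B X\<close>,
  which is immediate from the bimultiplicativity of \<open>bsign\<close>.\<close>

lemma cl_mult_assoc:
  assumes "finitely_supported a" "finitely_supported b" "finitely_supported c"
  shows "cl_mult (cl_mult a b) c = cl_mult a (cl_mult b c)"
proof
  fix C
  obtain K where K: "finite K" and a: "supported_on K a" and b: "supported_on K b"
    and c: "supported_on K c"
    using finitely_supported_common_support[OF assms] .
  have ab: "supported_on K (cl_mult a b)" and bc: "supported_on K (cl_mult b c)"
    using supported_on_cl_mult K a b c by auto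
  have fin: "A \<in> Pow K \<Longrightarrow> finite A" for A using K finite_subset by auto
  have "cl_mult (cl_mult a b) c C
      = (\<Sum>D\<in>Pow K. \<Sum>A\<in>Pow K. bsign D (sym_diff D C) * (bsign A (sym_diff A D) * a A * b (sym_diff A D))
           * c (sym_diff D C))"
    unfolding cl_mult_supported_on[OF K ab c] cl_mult_supported_on[OF K a b]
    by (simp add: sum_distrib_left sum_distrib_right)
  also have "\<dots> = (\<Sum>A\<in>Pow K. \<Sum>D\<in>Pow K. bsign D (sym_diff D C) * (bsign A (sym_diff A D) * a A * b (sym_diff A D))
           * c (sym_diff D C))"
    by (rule sum.swap)
  also have "\<dots> = (\<Sum>A\<in>Pow K. \<Sum>B\<in>Pow K. bsign (sym_diff A B) (sym_diff (sym_diff A B) C)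
           * (bsign A B * a A * b B) * c (sym_diff (sym_diff A B) C))"
  proof (rule sum.cong[OF refl])
    fix A assume "A \<in> Pow K"
    then show "(\<Sum>D\<in>Pow K. bsign D (sym_diff D C) * (bsign A (sym_diff A D) * a A * b (sym_diff A D))
           * c (sym_diff D C)) = (\<Sum>B\<in>Pow K. bsign (sym_diff A B) (sym_diff (sym_diff A B) C)
           * (bsign A B * a A * b B) * c (sym_diff (sym_diff A B) C))"
      by (subst sum_Pow_reindex_sym_diff[of A]) (auto simp: sym_diff_sym_diff_cancel)
  qed
  also have "\<dots> = (\<Sum>A\<in>Pow K. \<Sum>B\<in>Pow K. bsign A (sym_diff A C) * a A
           * (bsign B (sym_diff B (sym_diff A C)) * b B * c (sym_diff B (sym_diff A C))))"
  proof (intro sum.cong refl)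
    fix A B assume A: "A \<in> Pow K" and B: "B \<in> Pow K"
    let ?X = "sym_diff (sym_diff A B) C"
    have X: "sym_diff B (sym_diff A C) = ?X" "sym_diff A C = sym_diff B ?X" by blast+
    show "bsign (sym_diff A B) ?X * (bsign A B * a A * b B) * c ?X
        = bsign A (sym_diff A C) * a A * (bsign B (sym_diff B (sym_diff A C)) * b B * c (sym_diff B (sym_diff A C)))"
    proof (cases "c ?X = 0")
      case False
      then have "finite ?X" using c K finite_subset unfolding supported_on_def by blast
      then have cocycle: "bsign (sym_diff A B) ?X * bsign A B = bsign A (sym_diff A C) * bsign B ?X"
        using fin A B unfolding X(2) by (simp add: bsign_sym_diff_left bsign_sym_diff_right)
      have "bsign (sym_diff A B) ?X * (bsign A B * a A * b B) * c ?X
          = (bsign (sym_diff A B) ?X * bsign A B) * (a A * b B * c ?X)"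
        by (simp only: mult_ac)
      also have "\<dots> = bsign A (sym_diff A C) * a A * (bsign B ?X * b B * c ?X)"
        unfolding cocycle by (simp only: mult_ac)
      finally show ?thesis unfolding X(1) .
    qed (simp add: X(1))
  qed
  also have "\<dots> = cl_mult a (cl_mult b c) C"
    unfolding cl_mult_supported_on[OF K a bc] cl_mult_supported_on[OF K b c]
    by (simp add: sum_distrib_left sum_distrib_right)
  finally show "cl_mult (cl_mult a b) c C = cl_mult a (cl_mult b c) C" .
qed

lemma supported_on_cl_add: "supported_on K a \<Longrightarrow> supported_on K b \<Longrightarrow> supported_on K (cl_add a b)"
  unfolding supported_on_def cl_add_def by (metis add.right_neutral add_0)

lemma supported_on_cl_sub: "supported_on K a \<Longrightarrow> supported_on K b \<Longrightarrow> supported_on K (cl_sub a b)"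
  unfolding supported_on_def cl_sub_def by (metis diff_self diff_zero)

lemma supported_on_uminus: "supported_on K a \<Longrightarrow> supported_on K (\<lambda>A. - a A)"
  unfolding supported_on_def by simp

lemma supported_on_cl_scalar: "supported_on K (cl_scalar c)"
  unfolding supported_on_def cl_scalar_def by simp

lemma finitely_supported_cl_scalar: "finitely_supported (cl_scalar c)"
  using finitely_supportedI[OF finite.emptyI supported_on_cl_scalar] .

lemma finitely_supported_in_C: "in_C m a \<Longrightarrow> finitely_supported a"
  unfolding in_C_iff_supported_on by (rule finitely_supportedI[rotated]) auto

lemma cl_mult_cl_add_right:
  assumes "finitely_supported a" "finitely_supported b" "finitely_supported c"
  shows "cl_mult a (cl_add b c) = cl_add (cl_mult a b) (cl_mult a c)"
proof
  fix C
  obtain K where K: "finite K" and a: "supported_on K a" and b: "supported_on K b"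
    and c: "supported_on K c"
    using finitely_supported_common_support[OF assms] .
  show "cl_mult a (cl_add b c) C = cl_add (cl_mult a b) (cl_mult a c) C"
    unfolding cl_mult_supported_on[OF K a supported_on_cl_add[OF b c]] cl_add_def[of "cl_mult a b"]
      cl_mult_supported_on[OF K a b] cl_mult_supported_on[OF K a c]
    by (simp add: cl_add_def sum.distrib algebra_simps)
qed

lemma cl_mult_cl_add_left:
  assumes "finitely_supported a" "finitely_supported b" "finitely_supported c"
  shows "cl_mult (cl_add a b) c = cl_add (cl_mult a c) (cl_mult b c)"
proof
  fix C
  obtain K where K: "finite K" and a: "supported_on K a" and b: "supported_on K b"
    and c: "supported_on K c"
    using finitely_supported_common_support[OF assms] .
  show "cl_mult (cl_add a b) c C = cl_add (cl_mult a c) (cl_mult b c) C"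
    unfolding cl_mult_supported_on[OF K supported_on_cl_add[OF a b] c] cl_add_def[of "cl_mult a c"]
      cl_mult_supported_on[OF K a c] cl_mult_supported_on[OF K b c]
    by (simp add: cl_add_def sum.distrib algebra_simps)
qed

lemma cl_mult_cl_scalar_left:
  assumes "finitely_supported a"
  shows "cl_mult (cl_scalar c) a = cl_smul c a"
proof
  fix C
  obtain K where K: "finite K" and a: "supported_on K a"
    using assms unfolding finitely_supported_def by blast
  have "cl_mult (cl_scalar c) a C
      = (\<Sum>A\<in>Pow K. if A = {} then bsign A (sym_diff A C) * c * a (sym_diff A C) else 0)"
    unfolding cl_mult_supported_on[OF K supported_on_cl_scalar a]
    by (rule sum.cong) (auto simp: cl_scalar_def)
  then show "cl_mult (cl_scalar c) a C = cl_smul c a C"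
    using K by (simp add: bsign_def cl_smul_def)
qed

lemma cl_mult_cl_scalar_right:
  assumes "finitely_supported a"
  shows "cl_mult a (cl_scalar c) = cl_smul c a"
proof
  fix C
  obtain K where K: "finite K" and a: "supported_on K a"
    using assms unfolding finitely_supported_def by blast
  have "cl_mult a (cl_scalar c) C = (\<Sum>A\<in>Pow K. if A = C then bsign A (sym_diff A C) * a A * c else 0)"
    unfolding cl_mult_supported_on[OF K a supported_on_cl_scalar]
    by (rule sum.cong) (auto simp: cl_scalar_def)
  then show "cl_mult a (cl_scalar c) C = cl_smul c a C"
    using K a by (auto simp: bsign_def cl_smul_def supported_on_def)
qed

typedef clf = "{a. finitely_supported a}"
  using finitely_supported_cl_scalar by blast

setup_lifting type_definition_clf

instantiation clf :: ring_1
begin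

lift_definition zero_clf :: clf is "cl_scalar 0"
  by (rule finitely_supported_cl_scalar)

lift_definition one_clf :: clf is "cl_scalar 1"
  by (rule finitely_supported_cl_scalar)

lift_definition plus_clf :: "clf \<Rightarrow> clf \<Rightarrow> clf" is cl_add
  by (metis finitely_supportedI finitely_supported_common_support supported_on_cl_add)

lift_definition minus_clf :: "clf \<Rightarrow> clf \<Rightarrow> clf" is cl_sub
  by (metis finitely_supportedI finitely_supported_common_support supported_on_cl_sub)

lift_definition uminus_clf :: "clf \<Rightarrow> clf" is "\<lambda>a A. - a A"
  by (metis finitely_supported_def supported_on_uminus)

lift_definition times_clf :: "clf \<Rightarrow> clf \<Rightarrow> clf" is cl_mult
  by (metis finitely_supportedI finitely_supported_common_support supported_on_cl_mult)

instance
proof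
  fix a b c :: clf
  show "a * b * c = a * (b * c)" by transfer (rule cl_mult_assoc)
  show "1 * a = a" by transfer (simp add: cl_mult_cl_scalar_left cl_smul_def)
  show "a * 1 = a" by transfer (simp add: cl_mult_cl_scalar_right cl_smul_def)
  show "(a + b) * c = a * c + b * c" by transfer (rule cl_mult_cl_add_left)
  show "a * (b + c) = a * b + a * c" by transfer (rule cl_mult_cl_add_right)
  show "a + b + c = a + (b + c)" by transfer (simp add: cl_add_def add.assoc)
  show "a + b = b + a" by transfer (simp add: cl_add_def add.commute)
  show "0 + a = a" by transfer (simp add: cl_add_def cl_scalar_def)
  show "- a + a = 0" by transfer (simp add: cl_add_def cl_scalar_def)
  show "a - b = a + - b" by transfer (simp add: cl_add_def cl_sub_def)
  show "(0::clf) \<noteq> 1" by transfer (simp add: cl_scalar_def fun_eq_iff)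
qed

end

lift_definition of_complex :: "complex \<Rightarrow> clf" is cl_scalar
  by (rule finitely_supported_cl_scalar)

lemma of_complex_commute: "of_complex c * x = x * of_complex c"
  by transfer (simp add: cl_mult_cl_scalar_left cl_mult_cl_scalar_right)

lemma of_complex_mult: "of_complex (c * c') = of_complex c * of_complex c'"
  by transfer (simp only: cl_mult_cl_scalar_left[OF finitely_supported_cl_scalar],
      simp add: cl_smul_def cl_scalar_def fun_eq_iff)

lemma of_complex_add: "of_complex (c + c') = of_complex c + of_complex c'"
  by transfer (simp add: cl_add_def cl_scalar_def fun_eq_iff)

lemma of_complex_minus: "of_complex (- c) = - of_complex c"
  by transfer (simp add: cl_scalar_def fun_eq_iff)

lemma of_complex_0: "of_complex 0 = 0"
  by transfer simp

lemma of_complex_mult_of_complex: "of_complex c * (of_complex c' * x) = of_complex (c * c') * x"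
  by (simp add: of_complex_mult mult.assoc)

lemma mult_of_complex_left: "x * (of_complex c * y) = of_complex c * (x * y)"
  by (metis mult.assoc of_complex_commute)

lemma Rep_clf_of_complex_mult: "Rep_clf (of_complex c * x) = cl_smul c (Rep_clf x)"
  by transfer (rule cl_mult_cl_scalar_left)

lemma Rep_clf_eq_cl_scalar_iff: "Rep_clf x = cl_scalar c \<longleftrightarrow> x = of_complex c"
  by (metis Rep_clf_inject of_complex.rep_eq)

lemma Rep_Abs_clf_in_C: "in_C m y \<Longrightarrow> Rep_clf (Abs_clf y) = y"
  by (simp add: Abs_clf_inverse finitely_supported_in_C)

definition blade :: "nat set \<Rightarrow> cl" where
  "blade S = (\<lambda>A. if A = S then 1 else 0)"

lemma supported_on_blade: "S \<subseteq> K \<Longrightarrow> supported_on K (blade S)"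
  unfolding supported_on_def blade_def by auto

lemma finitely_supported_blade: "finite S \<Longrightarrow> finitely_supported (blade S)"
  using finitely_supportedI supported_on_blade by blast

lemma cl_smul_blade_empty: "cl_smul c (blade {}) = cl_scalar c"
  by (simp add: cl_scalar_def cl_smul_def blade_def fun_eq_iff)

lemma cl_mult_blade_left:
  assumes "finite K" "supported_on K y" "S \<subseteq> K"
  shows "cl_mult (blade S) y C = bsign S (sym_diff S C) * y (sym_diff S C)"
proof -
  have "cl_mult (blade S) y C
      = (\<Sum>A\<in>Pow K. if A = S then bsign A (sym_diff A C) * y (sym_diff A C) else 0)"
    unfolding cl_mult_supported_on[OF assms(1) supported_on_blade[OF assms(3)] assms(2)]
    by (rule sum.cong) (auto simp: blade_def)
  then show ?thesis using assms by simp
qed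

lemma cl_mult_blade_right:
  assumes "finite K" "supported_on K y" "S \<subseteq> K"
  shows "cl_mult y (blade S) C = bsign (sym_diff C S) S * y (sym_diff C S)"
proof -
  have "cl_mult y (blade S) C = (\<Sum>A\<in>Pow K. if A = sym_diff C S then bsign A S * y A else 0)"
    unfolding cl_mult_supported_on[OF assms(1,2) supported_on_blade[OF assms(3)]]
    by (rule sum.cong) (auto simp: blade_def)
  then show ?thesis
    using assms by (cases "sym_diff C S \<subseteq> K") (auto simp: supported_on_def)
qed

lemma blade_mult:
  assumes "finite A" "finite B"
  shows "cl_mult (blade A) (blade B) = cl_smul (bsign A B) (blade (sym_diff A B))"
proof
  fix C
  have "cl_mult (blade A) (blade B) C = bsign A (sym_diff A C) * blade B (sym_diff A C)"
    using assms by (intro cl_mult_blade_left[of "A \<union> B"] supported_on_blade) auto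
  moreover have "sym_diff A C = B \<longleftrightarrow> C = sym_diff A B" by blast
  ultimately show "cl_mult (blade A) (blade B) C = cl_smul (bsign A B) (blade (sym_diff A B)) C"
    unfolding blade_def cl_smul_def by auto
qed

lemma blade_mult_disjoint_ordered:
  assumes "finite A" "finite B" "\<And>i j. i \<in> A \<Longrightarrow> j \<in> B \<Longrightarrow> i < j"
  shows "cl_mult (blade A) (blade B) = blade (A \<union> B)"
proof -
  have "inversions A B = {}" and disjoint: "A \<inter> B = {}"
    using assms(3) unfolding inversions_def by (fastforce dest: less_asym)+
  then have "bsign A B = 1" by (simp add: bsign_eq)
  moreover have "sym_diff A B = A \<union> B" using disjoint by blast
  ultimately show ?thesis using blade_mult[OF assms(1,2)] by (simp add: cl_smul_def)
qed

lemma cl_gen_eq_blade: "cl_gen j = blade {j}"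
  by (simp add: cl_gen_def blade_def fun_eq_iff)

lemma ebar_eq_blade: "ebar k = blade {1..k}"
proof (induction k)
  case 0
  show ?case by (simp add: blade_def cl_scalar_def fun_eq_iff)
next
  case (Suc k)
  have "cl_mult (blade {1..k}) (blade {Suc k}) = blade ({1..k} \<union> {Suc k})"
    by (rule blade_mult_disjoint_ordered) auto
  moreover have "{1..k} \<union> {Suc k} = {1..Suc k}" by auto
  ultimately show ?case by (simp add: Suc cl_gen_eq_blade)
qed

lemma ebar_Suc_eq_E1: "ebar (Suc n) = E1 n"
  by (simp add: E1_def)

lemma E1_eq_blade: "E1 n = blade {1..n + 1}"
  by (simp add: ebar_eq_blade flip: ebar_Suc_eq_E1)

lemma E2_eq_blade: "E2 n = blade (insert (n + 2) {1..n})"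
proof -
  have "cl_mult (blade {1..n}) (blade {n + 2}) = blade ({1..n} \<union> {n + 2})"
    by (rule blade_mult_disjoint_ordered) auto
  then show ?thesis by (simp add: E2_def ebar_eq_blade cl_gen_eq_blade)
qed

lemma blade_mult_self:
  assumes "finite S"
  shows "cl_mult (blade S) (blade S) = cl_scalar ((-1) ^ (card S * (card S + 1) div 2))"
  using blade_mult[OF assms assms] by (simp add: bsign_self[OF assms] cl_smul_blade_empty)

lemma bsign_swap_eq:
  assumes "finite A" "finite B"
  shows "bsign B A = (-1) ^ (card A * card B + card (A \<inter> B)) * bsign A B"
  using bsign_swap[OF assms] bsign_square[of A B] by (metis mult.assoc mult.commute mult_1)

lemma blade_mult_commute:
  assumes "finite A" "finite B"
  shows "cl_mult (blade B) (blade A)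
    = cl_smul ((-1) ^ (card A * card B + card (A \<inter> B))) (cl_mult (blade A) (blade B))"
proof -
  have "sym_diff B A = sym_diff A B" by blast
  then show ?thesis
    unfolding blade_mult[OF assms] blade_mult[OF assms(2,1)] bsign_swap_eq[OF assms]
    by (simp add: cl_smul_def fun_eq_iff)
qed

text \<open>Moving a blade \<open>T \<subseteq> S\<close> past \<open>S\<close> costs the sign \<open>(-1)^(|T| |S| + |T|)\<close>, which is \<open>1\<close>
  when \<open>|S|\<close> is odd.\<close>

lemma cl_mult_blade_commute_odd:
  assumes y: "supported_on K y" and "K \<subseteq> S" "finite S" "odd (card S)"
  shows "cl_mult y (blade S) = cl_mult (blade S) y"
proof
  fix C
  have y': "supported_on S y" using y assms(2) by (rule supported_on_mono)
  have "bsign (sym_diff C S) S * y (sym_diff C S) = bsign S (sym_diff C S) * y (sym_diff C S)"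
  proof (cases "y (sym_diff C S) = 0")
    case False
    then have T: "sym_diff C S \<subseteq> S" using y' unfolding supported_on_def by blast
    then have "finite (sym_diff C S)" "sym_diff C S \<inter> S = sym_diff C S"
      using assms(3) finite_subset by blast+
    then have "bsign S (sym_diff C S) = (-1) ^ (card (sym_diff C S) * (card S + 1)) * bsign (sym_diff C S) S"
      using bsign_swap_eq[of "sym_diff C S" S] assms(3) by (simp add: algebra_simps)
    then show ?thesis using assms(4) by (simp add: power_mult)
  qed simp
  moreover have "sym_diff C S = sym_diff S C" by blast
  ultimately show "cl_mult y (blade S) C = cl_mult (blade S) y C"
    using cl_mult_blade_right[OF assms(3) y' subset_refl] cl_mult_blade_left[OF assms(3) y' subset_refl]
    by simp
qed

lemma E1_square: "cl_mult (E1 n) (E1 n) = cl_scalar ((-1) ^ ((n + 1) * (n + 2) div 2))"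
  using blade_mult_self[of "{1..n + 1}"] by (simp add: E1_eq_blade)

lemma E2_square: "cl_mult (E2 n) (E2 n) = cl_scalar ((-1) ^ ((n + 1) * (n + 2) div 2))"
  using blade_mult_self[of "insert (n + 2) {1..n}"] by (simp add: E2_eq_blade)

lemma E2_E1_anticommute:
  assumes "even n"
  shows "cl_mult (E2 n) (E1 n) = cl_smul (-1) (cl_mult (E1 n) (E2 n))"
proof -
  have "{1..n + 1} \<inter> insert (n + 2) {1..n} = {1..n}" by auto
  moreover have "odd ((n + 1) * (n + 1) + n)" using assms by simp
  ultimately show ?thesis
    unfolding E1_eq_blade E2_eq_blade
    using blade_mult_commute[of "{1..n + 1}" "insert (n + 2) {1..n}"] by simp
qed

lemma mu_eq_blade: "mu n = cl_smul (bsign {1..n + 1} (insert (n + 2) {1..n})) (blade {n + 1, n + 2})"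
proof -
  have "sym_diff {1..n + 1} (insert (n + 2) {1..n}) = {n + 1, n + 2}" by auto
  then show ?thesis using blade_mult[of "{1..n + 1}" "insert (n + 2) {1..n}"]
    by (simp add: mu_def E1_eq_blade E2_eq_blade)
qed

lemma in_C_commute_E1:
  assumes "even n" "in_C n y"
  shows "cl_mult y (E1 n) = cl_mult (E1 n) y"
  unfolding E1_eq_blade using assms
  by (intro cl_mult_blade_commute_odd[where K = "{1..n}"]) (auto simp: in_C_iff_supported_on)

lemma in_C_commute_E2:
  assumes "even n" "in_C n y"
  shows "cl_mult y (E2 n) = cl_mult (E2 n) y"
  unfolding E2_eq_blade using assms
  by (intro cl_mult_blade_commute_odd[where K = "{1..n}"]) (auto simp: in_C_iff_supported_on)

definition blade_cofactor :: "nat \<Rightarrow> nat set \<Rightarrow> complex \<Rightarrow> cl \<Rightarrow> cl" where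
  "blade_cofactor n W c a = (\<lambda>B. if B \<subseteq> {1..n} then a (sym_diff B W) / (c * bsign B W) else 0)"

lemma in_C_blade_cofactor: "in_C n (blade_cofactor n W c a)"
  unfolding in_C_def blade_cofactor_def by auto

lemma cl_mult_blade_cofactor:
  assumes "finite W" "c \<noteq> 0"
  shows "cl_mult (blade_cofactor n W c a) (cl_smul c (blade W)) C
    = (if sym_diff C W \<subseteq> {1..n} then a C else 0)"
proof -
  have "supported_on ({1..n} \<union> W) (blade_cofactor n W c a)"
    using in_C_blade_cofactor unfolding in_C_iff_supported_on by (rule supported_on_mono) simp
  then have "cl_mult (blade_cofactor n W c a) (cl_smul c (blade W)) C
      = c * (bsign (sym_diff C W) W * blade_cofactor n W c a (sym_diff C W))"
    unfolding cl_mult_cl_smul_right using cl_mult_blade_right[of "{1..n} \<union> W"] assms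
    by (simp add: cl_smul_def)
  moreover have "sym_diff (sym_diff C W) W = C" by blast
  ultimately show ?thesis
    using assms bsign_nonzero[of "sym_diff C W" W] by (simp add: blade_cofactor_def)
qed

lemma sym_diff_subset_iff_agree_on_top:
  fixes n :: nat
  assumes "C \<subseteq> {1..n + 2}" "W \<subseteq> {1..n + 2}"
  shows "sym_diff C W \<subseteq> {1..n} \<longleftrightarrow> C \<inter> {n + 1, n + 2} = W \<inter> {n + 1, n + 2}"
proof -
  have "{1..n + 2} = {1..n} \<union> {n + 1, n + 2}" and "{1..n} \<inter> {n + 1, n + 2} = {}" by auto
  then show ?thesis using assms by blast
qed

lemma in_C_add_2_decomposition:
  assumes a: "in_C (n + 2) a"
  shows "\<exists>a0 a1 a2 a3. in_C n a0 \<and> in_C n a1 \<and> in_C n a2 \<and> in_C n a3 \<and>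
    a = cl_add (cl_add (cl_add a0 (cl_mult a1 (E1 n))) (cl_mult a2 (E2 n))) (cl_mult a3 (mu n))"
proof -
  define H where "H = {n + 1, n + 2}"
  define W1 where "W1 = {1..n + 1}"
  define W2 where "W2 = insert (n + 2) {1..n}"
  define \<sigma> where "\<sigma> = bsign W1 W2"
  have part: "cl_mult (blade_cofactor n W c a) (cl_smul c (blade W)) C = (if C \<inter> H = W \<inter> H then a C else 0)"
    if "W \<subseteq> {1..n + 2}" "c \<noteq> 0" for W c C
  proof -
    have "cl_mult (blade_cofactor n W c a) (cl_smul c (blade W)) C
        = (if sym_diff C W \<subseteq> {1..n} then a C else 0)"
      using that finite_subset[OF that(1)] by (intro cl_mult_blade_cofactor) auto
    moreover have "sym_diff C W \<subseteq> {1..n} \<longleftrightarrow> C \<inter> H = W \<inter> H" if "a C \<noteq> 0"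
      using a that \<open>W \<subseteq> {1..n + 2}\<close> unfolding in_C_def H_def
      by (intro sym_diff_subset_iff_agree_on_top) auto
    ultimately show ?thesis by auto
  qed
  define a0 where "a0 = blade_cofactor n {} 1 a"
  define a1 where "a1 = blade_cofactor n W1 1 a"
  define a2 where "a2 = blade_cofactor n W2 1 a"
  define a3 where "a3 = blade_cofactor n H \<sigma> a"
  have "cl_mult a0 (cl_smul 1 (blade {})) = a0"
    unfolding cl_smul_blade_empty a0_def
    by (simp add: cl_mult_cl_scalar_right finitely_supported_in_C[OF in_C_blade_cofactor] cl_smul_def)
  then have "a0 C = (if C \<inter> H = {} then a C else 0)" for C
    using part[of "{}" 1 C] unfolding a0_def by simp
  moreover have "E1 n = cl_smul 1 (blade W1)" "E2 n = cl_smul 1 (blade W2)" "mu n = cl_smul \<sigma> (blade H)"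
    unfolding E1_eq_blade E2_eq_blade mu_eq_blade W1_def W2_def \<sigma>_def H_def by (simp_all add: cl_smul_def)
  moreover have "W1 \<inter> H = {n + 1}" "W2 \<inter> H = {n + 2}" "W1 \<subseteq> {1..n + 2}" "W2 \<subseteq> {1..n + 2}"
    "H \<subseteq> {1..n + 2}" "\<sigma> \<noteq> 0"
    unfolding W1_def W2_def H_def \<sigma>_def by (auto simp: bsign_nonzero)
  ultimately have sum: "cl_add (cl_add (cl_add a0 (cl_mult a1 (E1 n))) (cl_mult a2 (E2 n))) (cl_mult a3 (mu n)) C
      = (if C \<inter> H = {} then a C else 0) + (if C \<inter> H = {n + 1} then a C else 0)
        + (if C \<inter> H = {n + 2} then a C else 0) + (if C \<inter> H = H then a C else 0)" for C
    unfolding a1_def a2_def a3_def cl_add_def by (simp add: part)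
  have "C \<inter> H \<in> {{}, {n + 1}, {n + 2}, H}" for C
    unfolding H_def by (cases "n + 1 \<in> C"; cases "n + 2 \<in> C") auto
  moreover have "{n + 1} \<noteq> H" "{n + 2} \<noteq> H" "H \<noteq> {}" unfolding H_def by auto
  ultimately have "a = cl_add (cl_add (cl_add a0 (cl_mult a1 (E1 n))) (cl_mult a2 (E2 n))) (cl_mult a3 (mu n))"
    unfolding sum fun_eq_iff by auto
  then show ?thesis
    using in_C_blade_cofactor unfolding a0_def a1_def a2_def a3_def by blast
qed

section \<open>The quaternion algebra of an anticommuting pair\<close>

locale anticommuting_pair =
  fixes e1 e2 :: clf and r s :: complex
  assumes e1_square: "e1 * e1 = of_complex r"
    and e2_square: "e2 * e2 = of_complex r"
    and anticommute: "e2 * e1 = - (e1 * e2)"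
    and s_square: "s * s = r"
    and s_nonzero: "s \<noteq> 0"
begin

definition quat :: "complex \<Rightarrow> complex \<Rightarrow> complex \<Rightarrow> complex \<Rightarrow> clf" where
  "quat c0 c1 c2 c3 = of_complex c0 + of_complex c1 * e1 + of_complex c2 * e2 + of_complex c3 * (e1 * e2)"

lemma quat_of_complex: "quat c 0 0 0 = of_complex c"
  by (simp add: quat_def of_complex_0)

lemma quat_add:
  "quat a0 a1 a2 a3 + quat b0 b1 b2 b3 = quat (a0 + b0) (a1 + b1) (a2 + b2) (a3 + b3)"
  unfolding quat_def of_complex_add distrib_right by (simp only: add_ac)

lemma of_complex_mult_quat: "of_complex c * quat a0 a1 a2 a3 = quat (c * a0) (c * a1) (c * a2) (c * a3)"
  unfolding quat_def distrib_left of_complex_mult mult.assoc ..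

lemma quat_mult_e1: "quat a0 a1 a2 a3 * e1 = quat (r * a1) a0 (- r * a3) (- a2)"
proof -
  have "of_complex a3 * (e1 * e2) * e1 = - (of_complex a3 * ((e1 * e1) * e2))"
    by (simp add: mult.assoc anticommute)
  then have "of_complex a3 * (e1 * e2) * e1 = - (of_complex (a3 * r) * e2)"
    by (simp add: e1_square of_complex_mult_of_complex)
  moreover have "of_complex a2 * e2 * e1 = - (of_complex a2 * (e1 * e2))"
    by (simp add: mult.assoc anticommute)
  moreover have "of_complex a1 * e1 * e1 = of_complex (a1 * r)"
    by (simp only: mult.assoc e1_square of_complex_mult)
  ultimately show ?thesis
    unfolding quat_def distrib_right by (simp add: of_complex_minus algebra_simps)
qed

lemma quat_mult_e2: "quat a0 a1 a2 a3 * e2 = quat (r * a2) (r * a3) a0 a1"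
proof -
  have "of_complex a3 * (e1 * e2) * e2 = of_complex a3 * (e1 * of_complex r)"
    by (simp add: mult.assoc e2_square)
  then have "of_complex a3 * (e1 * e2) * e2 = of_complex (a3 * r) * e1"
    by (simp only: of_complex_commute[of r e1, symmetric] of_complex_mult_of_complex)
  moreover have "of_complex a2 * e2 * e2 = of_complex (a2 * r)"
    by (simp only: mult.assoc e2_square of_complex_mult)
  ultimately show ?thesis
    unfolding quat_def distrib_right by (simp add: algebra_simps)
qed

lemma quat_mult:
  "quat u0 u1 u2 u3 * quat v0 v1 v2 v3 =
    quat (u0 * v0 + r * u1 * v1 + r * u2 * v2 - r * r * u3 * v3)
         (u0 * v1 + u1 * v0 - r * u2 * v3 + r * u3 * v2)
         (u0 * v2 + u2 * v0 + r * u1 * v3 - r * u3 * v1)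
         (u0 * v3 + u3 * v0 + u1 * v2 - u2 * v1)"
proof -
  let ?u = "quat u0 u1 u2 u3"
  have "?u * quat v0 v1 v2 v3
      = of_complex v0 * ?u + of_complex v1 * (?u * e1) + of_complex v2 * (?u * e2)
        + of_complex v3 * (?u * e1 * e2)"
    unfolding quat_def[of v0] distrib_left
    by (simp only: of_complex_commute mult_of_complex_left mult.assoc)
  also have "\<dots> = quat (v0 * u0 + v1 * (r * u1) + v2 * (r * u2) + v3 * (r * (- r * u3)))
      (v0 * u1 + v1 * u0 + v2 * (r * u3) + v3 * (r * - u2))
      (v0 * u2 + v1 * (- r * u3) + v2 * u0 + v3 * (r * u1))
      (v0 * u3 + v1 * (- u2) + v2 * u1 + v3 * u0)"
    by (simp only: quat_mult_e1 quat_mult_e2 of_complex_mult_quat quat_add)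
  finally show ?thesis by (simp add: algebra_simps)
qed

lemma commute_quat:
  assumes "y * e1 = e1 * y" "y * e2 = e2 * y"
  shows "y * quat c0 c1 c2 c3 = quat c0 c1 c2 c3 * y"
proof -
  have "y * (e1 * e2) = e1 * e2 * y" by (metis assms mult.assoc)
  with assms show ?thesis
    unfolding quat_def distrib_left distrib_right
    by (simp add: mult_of_complex_left of_complex_commute[symmetric] mult.assoc)
qed

text \<open>Block \<open>(p, q)\<close> of \<open>P_(n+2)\<close> is \<open>Pblock p q * P_n\<close>, where the block of an index
  \<open>i < 2 d\<close> is \<open>d \<le> i\<close>; \<open>phi_block p q\<close> is block \<open>(p, q)\<close> of the claimed value of
  \<open>P_(n+2) (a I) P_(n+2)\<^sup>-\<^sup>1\<close>, in terms of the scalars \<open>phi_n(a\<^sub>k)\<close>.\<close>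

definition Pblock :: "bool \<Rightarrow> bool \<Rightarrow> clf" where
  "Pblock p q =
    (if \<not> p \<and> \<not> q then quat (1/2) (1/(2*s)) 0 0
     else if \<not> p \<and> q then quat 0 0 (1/2) (- 1/(2*s))
     else if p \<and> \<not> q then quat 0 0 (1/(2*r)) (1/(2*r*s))
     else quat (1/2) (- 1/(2*s)) 0 0)"

definition phi_block :: "bool \<Rightarrow> bool \<Rightarrow> complex \<Rightarrow> complex \<Rightarrow> complex \<Rightarrow> complex \<Rightarrow> complex" where
  "phi_block p q g0 g1 g2 g3 =
    (if \<not> p \<and> \<not> q then g0 + s * g1
     else if \<not> p \<and> q then r * (g2 + s * g3)
     else if p \<and> \<not> q then g2 - s * g3
     else g0 - s * g1)"

lemma Pblock_conj_quat:
  "Pblock p False * quat g0 g1 g2 g3 * Pblock False q + Pblock p True * quat g0 g1 g2 g3 * Pblock True q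
    = of_complex (phi_block p q g0 g1 g2 g3)"
proof -
  have "r \<noteq> 0" using s_square s_nonzero by auto
  then show ?thesis
    unfolding quat_of_complex[symmetric]
    by (cases p; cases q; simp only: Pblock_def phi_block_def if_True if_False simp_thms quat_mult quat_add;
        intro arg_cong4[where f = quat]; use s_nonzero in \<open>simp add: s_square[symmetric] field_simps\<close>; algebra)
qed

lemma commute_Pblock: "y * e1 = e1 * y \<Longrightarrow> y * e2 = e2 * y \<Longrightarrow> y * Pblock p q = Pblock p q * y"
  unfolding Pblock_def using commute_quat by simp

end

lemma cl_is_scalar_eq: "cl_is_scalar x \<Longrightarrow> x = cl_scalar (x {})"
  unfolding cl_is_scalar_def cl_scalar_def by auto

lemma Rep_clf_sum: "Rep_clf (sum f S) = (\<lambda>A. \<Sum>x\<in>S. Rep_clf (f x) A)"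
proof (induction S rule: infinite_finite_induct)
  case (infinite S)
  then show ?case by (simp add: zero_clf.rep_eq cl_scalar_def)
next
  case empty
  then show ?case by (simp add: zero_clf.rep_eq cl_scalar_def)
next
  case (insert x S)
  then show ?case by (simp add: plus_clf.rep_eq cl_add_def)
qed

lemma mmul_Rep_clf:
  assumes "\<And>j. j < D \<Longrightarrow> M i j = Rep_clf (M' j)" "\<And>j. j < D \<Longrightarrow> N j k = Rep_clf (N' j)"
  shows "mmul D M N i k = Rep_clf (\<Sum>j<D. M' j * N' j)"
  unfolding mmul_def Rep_clf_sum using assms by (simp add: times_clf.rep_eq)

lemma mmul_mdiag:
  assumes "j < D"
  shows "mmul D M (mdiag a) i j = cl_mult (M i j) a"
proof -
  have "cl_mult x (cl_scalar 0) = (\<lambda>_. 0)" for x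
    by (simp add: cl_mult_def cl_scalar_def)
  then have "(\<Sum>l<D. cl_mult (M i l) (mdiag a l j) A) = (\<Sum>l<D. if l = j then cl_mult (M i j) a A else 0)" for A
    by (intro sum.cong) (auto simp: mdiag_def)
  then show ?thesis using assms by (simp add: mmul_def)
qed

lemma mod_double_cases: "(i::nat) < 2 * d \<Longrightarrow> i mod d = (if i < d then i else i - d)"
  by (simp add: le_mod_geq)

lemma sum_lessThan_double:
  fixes f :: "bool \<Rightarrow> nat \<Rightarrow> 'a::comm_monoid_add"
  shows "(\<Sum>j<2 * d. f (d \<le> j) (j mod d)) = (\<Sum>j<d. f False j) + (\<Sum>j<d. f True j)"
proof -
  have split: "(\<Sum>j<2 * d. g j) = (\<Sum>j<d. g j) + (\<Sum>j<d. g (j + d))" for g :: "nat \<Rightarrow> 'a"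
  proof -
    have "(\<Sum>j<2 * d. g j) = (\<Sum>j<d. g j) + (\<Sum>j\<in>{d..<d + d}. g j)"
      by (simp add: mult_2 lessThan_atLeast0 sum.atLeastLessThan_concat)
    also have "(\<Sum>j\<in>{d..<d + d}. g j) = (\<Sum>j<d. g (j + d))"
      using sum.shift_bounds_nat_ivl[of g 0 d d] by (simp add: lessThan_atLeast0)
    finally show ?thesis .
  qed
  show ?thesis unfolding split by (intro arg_cong2[where f = "(+)"] sum.cong) auto
qed

lemma sum_blocks_conj:
  fixes X Y :: "bool \<Rightarrow> 'a::ring_1" and d :: nat
  shows "(\<Sum>j<2 * d. X (d \<le> j) * M (j mod d) * A * (N (j mod d) * Y (d \<le> j)))
    = X False * (\<Sum>j<d. M j * A * N j) * Y False + X True * (\<Sum>j<d. M j * A * N j) * Y True"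
  using sum_lessThan_double[of "\<lambda>b j. X b * M j * A * (N j * Y b)" d]
  by (simp add: sum_distrib_left sum_distrib_right mult.assoc)

section \<open>The recursion step\<close>

locale clifford_recursion_step =
  fixes n d :: nat and P Q :: clmat and r s :: complex
  assumes n_even: "even n"
    and P_in_C: "mat_in_C n d P" and Q_in_C: "mat_in_C n d Q"
    and P_Q_inverse: "is_inverse d P Q"
    and r_eq: "r = (-1) ^ ((n + 1) * (n + 2) div 2)"
    and s_sqrt: "s ^ 2 = r"
begin

definition e1 :: clf where "e1 = Abs_clf (E1 n)"
definition e2 :: clf where "e2 = Abs_clf (E2 n)"

lemma Rep_e1: "Rep_clf e1 = E1 n"
  unfolding e1_def E1_eq_blade by (simp add: Abs_clf_inverse finitely_supported_blade)

lemma Rep_e2: "Rep_clf e2 = E2 n"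
  unfolding e2_def E2_eq_blade by (simp add: Abs_clf_inverse finitely_supported_blade)

sublocale anticommuting_pair e1 e2 r s
proof
  show "e1 * e1 = of_complex r" "e2 * e2 = of_complex r"
    unfolding Rep_clf_eq_cl_scalar_iff[symmetric] times_clf.rep_eq Rep_e1 Rep_e2 r_eq
    by (simp_all only: E1_square E2_square)
  show "e2 * e1 = - (e1 * e2)"
    unfolding Rep_clf_inject[symmetric] times_clf.rep_eq uminus_clf.rep_eq Rep_e1 Rep_e2
    by (simp add: E2_E1_anticommute[OF n_even] cl_smul_def)
  show "s * s = r" using s_sqrt by (simp add: power2_eq_square)
  then show "s \<noteq> 0" using r_eq by auto
qed

definition Pc :: "nat \<Rightarrow> nat \<Rightarrow> clf" where "Pc i j = Abs_clf (P i j)"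
definition Qc :: "nat \<Rightarrow> nat \<Rightarrow> clf" where "Qc i j = Abs_clf (Q i j)"

lemma Rep_Pc: "i < d \<Longrightarrow> j < d \<Longrightarrow> Rep_clf (Pc i j) = P i j"
  using P_in_C unfolding Pc_def mat_in_C_def by (blast intro: Rep_Abs_clf_in_C)

lemma Rep_Qc: "i < d \<Longrightarrow> j < d \<Longrightarrow> Rep_clf (Qc i j) = Q i j"
  using Q_in_C unfolding Qc_def mat_in_C_def by (blast intro: Rep_Abs_clf_in_C)

lemma in_C_commute_e1_e2:
  assumes "in_C n y"
  shows "Abs_clf y * e1 = e1 * Abs_clf y" "Abs_clf y * e2 = e2 * Abs_clf y"
  unfolding Rep_clf_inject[symmetric] times_clf.rep_eq Rep_e1 Rep_e2 Rep_Abs_clf_in_C[OF assms]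
  using in_C_commute_E1 in_C_commute_E2 n_even assms by simp_all

lemma Pc_commute_Pblock: "i < d \<Longrightarrow> j < d \<Longrightarrow> Pc i j * Pblock p q = Pblock p q * Pc i j"
  using P_in_C unfolding Pc_def mat_in_C_def by (simp add: commute_Pblock in_C_commute_e1_e2)

lemma Qc_commute_Pblock: "i < d \<Longrightarrow> j < d \<Longrightarrow> Qc i j * Pblock p q = Pblock p q * Qc i j"
  using Q_in_C unfolding Qc_def mat_in_C_def by (simp add: commute_Pblock in_C_commute_e1_e2)

lemma Rep_quat: "Rep_clf (quat c0 c1 c2 c3) = (\<lambda>A. cl_scalar c0 A + c1 * E1 n A + c2 * E2 n A + c3 * mu n A)"
  unfolding quat_def plus_clf.rep_eq Rep_clf_of_complex_mult
  by (simp add: times_clf.rep_eq Rep_e1 Rep_e2 of_complex.rep_eq mu_def cl_add_def cl_smul_def)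

lemma Rep_Pblock:
  "Rep_clf (Pblock False False) = cl_smul (1/2) (cl_add (cl_scalar 1) (cl_smul (1/s) (ebar (Suc n))))"
  "Rep_clf (Pblock False True) = cl_smul (1/2) (cl_sub (E2 n) (cl_smul (1/s) (mu n)))"
  "Rep_clf (Pblock True False) = cl_smul (1/2) (cl_smul (1/r) (cl_add (E2 n) (cl_smul (1/s) (mu n))))"
  "Rep_clf (Pblock True True) = cl_smul (1/2) (cl_sub (cl_scalar 1) (cl_smul (1/s) (ebar (Suc n))))"
  unfolding Pblock_def ebar_Suc_eq_E1
  by (simp_all add: Rep_quat cl_add_def cl_sub_def cl_smul_def cl_scalar_def fun_eq_iff algebra_simps)

lemma Pnext_entry:
  assumes "i < 2 * d" "j < 2 * d"
  shows "Pnext n r s d P i j = Rep_clf (Pblock (d \<le> i) (d \<le> j) * Pc (i mod d) (j mod d))"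
  using assms unfolding times_clf.rep_eq
  by (cases "i < d"; cases "j < d")
    (simp_all add: Pnext_def msmul_def blk_def mlmul_def Rep_Pblock Rep_Pc mod_double_cases cl_mult_cl_smul_left)

lemma Pnext'_entry:
  assumes "i < 2 * d" "j < 2 * d"
  shows "Pnext' n r s d Q i j = Rep_clf (Qc (i mod d) (j mod d) * Pblock (d \<le> i) (d \<le> j))"
  using assms unfolding times_clf.rep_eq
  by (cases "i < d"; cases "j < d")
    (simp_all add: Pnext'_def msmul_def blk_def mrmul_def Rep_Pblock Rep_Qc mod_double_cases cl_mult_cl_smul_right)

lemma sum_Pc_Qc:
  assumes "i < d" "k < d"
  shows "(\<Sum>j<d. Pc i j * Qc j k) = of_complex (if i = k then 1 else 0)"
proof -
  have "Rep_clf (\<Sum>j<d. Pc i j * Qc j k) = mmul d P Q i k"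
    using assms by (intro mmul_Rep_clf[symmetric]) (simp_all add: Rep_Pc Rep_Qc)
  also have "\<dots> = cl_scalar (if i = k then 1 else 0)"
    using P_Q_inverse assms by (auto simp: is_inverse_def meq_def mdiag_def)
  finally show ?thesis by (simp add: Rep_clf_eq_cl_scalar_iff)
qed

lemma sum_Qc_Pc:
  assumes "i < d" "k < d"
  shows "(\<Sum>j<d. Qc i j * Pc j k) = of_complex (if i = k then 1 else 0)"
proof -
  have "Rep_clf (\<Sum>j<d. Qc i j * Pc j k) = mmul d Q P i k"
    using assms by (intro mmul_Rep_clf[symmetric]) (simp_all add: Rep_Pc Rep_Qc)
  also have "\<dots> = cl_scalar (if i = k then 1 else 0)"
    using P_Q_inverse assms by (auto simp: is_inverse_def meq_def mdiag_def)
  finally show ?thesis by (simp add: Rep_clf_eq_cl_scalar_iff)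
qed

lemma phi_block_delta:
  assumes "i < 2 * d" "k < 2 * d"
  shows "phi_block (d \<le> i) (d \<le> k) (if i mod d = k mod d then 1 else 0) 0 0 0 = (if i = k then 1 else 0)"
  using assms by (auto simp: phi_block_def mod_double_cases)

lemma Pnext_Pnext'_inverse: "is_inverse (2 * d) (Pnext n r s d P) (Pnext' n r s d Q)"
  unfolding is_inverse_def meq_def
proof (intro conjI allI impI)
  fix i k assume ik: "i < 2 * d" "k < 2 * d"
  let ?p = "d \<le> i" and ?q = "d \<le> k" and ?i = "i mod d" and ?k = "k mod d"
  let ?\<delta> = "if ?i = ?k then 1 else 0"
  have ik': "?i < d" "?k < d" using ik by (auto simp: mod_double_cases)
  have "mmul (2 * d) (Pnext n r s d P) (Pnext' n r s d Q) i k
      = Rep_clf (\<Sum>j<2 * d. Pblock ?p (d \<le> j) * Pc ?i (j mod d) * 1 * (Qc (j mod d) ?k * Pblock (d \<le> j) ?q))"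
    using ik by (intro mmul_Rep_clf) (simp_all add: Pnext_entry Pnext'_entry)
  also have "\<dots> = Rep_clf (Pblock ?p False * quat ?\<delta> 0 0 0 * Pblock False ?q + Pblock ?p True * quat ?\<delta> 0 0 0 * Pblock True ?q)"
    using sum_blocks_conj[where X = "Pblock ?p" and M = "Pc ?i" and A = 1 and N = "\<lambda>j. Qc j ?k"
        and Y = "\<lambda>b. Pblock b ?q"] ik' by (simp add: sum_Pc_Qc quat_of_complex)
  also have "\<dots> = mdiag (cl_scalar 1) i k"
    unfolding Pblock_conj_quat phi_block_delta[OF ik] by (simp add: of_complex.rep_eq mdiag_def cl_scalar_def)
  finally show "mmul (2 * d) (Pnext n r s d P) (Pnext' n r s d Q) i k = mdiag (cl_scalar 1) i k" .
next
  fix i k assume ik: "i < 2 * d" "k < 2 * d"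
  let ?p = "d \<le> i" and ?q = "d \<le> k" and ?i = "i mod d" and ?k = "k mod d"
  let ?\<delta> = "if ?i = ?k then 1 else 0"
  have ik': "?i < d" "?k < d" using ik by (auto simp: mod_double_cases)
  have "mmul (2 * d) (Pnext' n r s d Q) (Pnext n r s d P) i k
      = Rep_clf (\<Sum>j<2 * d. Qc ?i (j mod d) * Pblock ?p (d \<le> j) * (Pblock (d \<le> j) ?q * Pc (j mod d) ?k))"
    using ik by (intro mmul_Rep_clf) (simp_all add: Pnext_entry Pnext'_entry)
  also have "\<dots> = Rep_clf (\<Sum>j<2 * d. Pblock ?p (d \<le> j) * Qc ?i (j mod d) * 1 * (Pc (j mod d) ?k * Pblock (d \<le> j) ?q))"
    using ik' by (intro arg_cong[where f = Rep_clf] sum.cong refl)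
      (simp add: Qc_commute_Pblock Pc_commute_Pblock mod_double_cases)
  also have "\<dots> = Rep_clf (Pblock ?p False * quat ?\<delta> 0 0 0 * Pblock False ?q + Pblock ?p True * quat ?\<delta> 0 0 0 * Pblock True ?q)"
    using sum_blocks_conj[where X = "Pblock ?p" and M = "Qc ?i" and A = 1 and N = "\<lambda>j. Pc j ?k"
        and Y = "\<lambda>b. Pblock b ?q"] ik' by (simp add: sum_Qc_Pc quat_of_complex)
  also have "\<dots> = mdiag (cl_scalar 1) i k"
    unfolding Pblock_conj_quat phi_block_delta[OF ik] by (simp add: of_complex.rep_eq mdiag_def cl_scalar_def)
  finally show "mmul (2 * d) (Pnext' n r s d Q) (Pnext n r s d P) i k = mdiag (cl_scalar 1) i k" .
qed

lemma Pnext_conj_entry: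
  assumes "i < 2 * d" "k < 2 * d"
  shows "mmul (2 * d) (mmul (2 * d) (Pnext n r s d P) (mdiag (Rep_clf A))) (Pnext' n r s d Q) i k
    = Rep_clf (Pblock (d \<le> i) False * (\<Sum>j<d. Pc (i mod d) j * A * Qc j (k mod d)) * Pblock False (d \<le> k)
        + Pblock (d \<le> i) True * (\<Sum>j<d. Pc (i mod d) j * A * Qc j (k mod d)) * Pblock True (d \<le> k))"
proof -
  let ?p = "d \<le> i" and ?q = "d \<le> k" and ?i = "i mod d" and ?k = "k mod d"
  have "mmul (2 * d) (Pnext n r s d P) (mdiag (Rep_clf A)) i j = Rep_clf (Pblock ?p (d \<le> j) * Pc ?i (j mod d) * A)"
    if "j < 2 * d" for j
    using assms that by (simp add: mmul_mdiag Pnext_entry times_clf.rep_eq)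
  then have "mmul (2 * d) (mmul (2 * d) (Pnext n r s d P) (mdiag (Rep_clf A))) (Pnext' n r s d Q) i k
      = Rep_clf (\<Sum>j<2 * d. Pblock ?p (d \<le> j) * Pc ?i (j mod d) * A * (Qc (j mod d) ?k * Pblock (d \<le> j) ?q))"
    using assms by (intro mmul_Rep_clf) (simp_all add: Pnext'_entry)
  then show ?thesis
    using sum_blocks_conj[where X = "Pblock ?p" and M = "Pc ?i" and N = "\<lambda>j. Qc j ?k" and Y = "\<lambda>b. Pblock b ?q"]
    by simp
qed

lemma blk_phi_block_entry:
  assumes "i < 2 * d" "k < 2 * d"
    and "F0 (i mod d) (k mod d) = cl_scalar g0" "F1 (i mod d) (k mod d) = cl_scalar g1"
    and "F2 (i mod d) (k mod d) = cl_scalar g2" "F3 (i mod d) (k mod d) = cl_scalar g3"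
  shows "blk d (madd F0 (msmul s F1)) (msmul r (madd F2 (msmul s F3))) (msub F2 (msmul s F3))
      (msub F0 (msmul s F1)) i k = cl_scalar (phi_block (d \<le> i) (d \<le> k) g0 g1 g2 g3)"
  using assms
  by (cases "i < d"; cases "k < d")
    (simp_all add: mod_double_cases blk_def madd_def msub_def msmul_def cl_add_def cl_sub_def cl_smul_def
      cl_scalar_def phi_block_def fun_eq_iff algebra_simps)

context
  assumes phi_scalar: "\<forall>a. in_C n a \<longrightarrow> mat_scalar d (phi d P Q a)"
begin

lemma sum_Pc_Qc_conj:
  assumes "in_C n y" "i < d" "k < d"
  shows "(\<Sum>j<d. Pc i j * Abs_clf y * Qc j k) = of_complex (phi d P Q y i k {})"
proof -
  have "mmul d P (mdiag y) i j = Rep_clf (Pc i j * Abs_clf y)" if "j < d" for j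
    using assms that by (simp add: mmul_mdiag times_clf.rep_eq Rep_Pc Rep_Abs_clf_in_C)
  then have "Rep_clf (\<Sum>j<d. Pc i j * Abs_clf y * Qc j k) = phi d P Q y i k"
    unfolding phi_def using assms by (intro mmul_Rep_clf[symmetric]) (simp_all add: Rep_Qc)
  also have "\<dots> = cl_scalar (phi d P Q y i k {})"
    using phi_scalar assms by (intro cl_is_scalar_eq) (simp add: mat_scalar_def)
  finally show ?thesis by (simp add: Rep_clf_eq_cl_scalar_iff)
qed

lemma sum_Pc_Qc_conj_quat:
  assumes "in_C n a0" "in_C n a1" "in_C n a2" "in_C n a3" "i < d" "k < d"
  shows "(\<Sum>j<d. Pc i j * (Abs_clf a0 + Abs_clf a1 * e1 + Abs_clf a2 * e2 + Abs_clf a3 * (e1 * e2)) * Qc j k)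
    = quat (phi d P Q a0 i k {}) (phi d P Q a1 i k {}) (phi d P Q a2 i k {}) (phi d P Q a3 i k {})"
proof -
  have "Pc i j * (Abs_clf a0 + Abs_clf a1 * e1 + Abs_clf a2 * e2 + Abs_clf a3 * (e1 * e2)) * Qc j k
      = Pc i j * Abs_clf a0 * Qc j k + Pc i j * Abs_clf a1 * Qc j k * e1
        + Pc i j * Abs_clf a2 * Qc j k * e2 + Pc i j * Abs_clf a3 * Qc j k * (e1 * e2)" if "j < d" for j
  proof -
    have "e1 * Qc j k = Qc j k * e1" "e2 * Qc j k = Qc j k * e2"
      using Q_in_C that assms unfolding Qc_def mat_in_C_def by (simp_all add: in_C_commute_e1_e2)
    then show ?thesis by (simp add: algebra_simps mult.assoc) (metis mult.assoc)
  qed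
  then have "(\<Sum>j<d. Pc i j * (Abs_clf a0 + Abs_clf a1 * e1 + Abs_clf a2 * e2 + Abs_clf a3 * (e1 * e2)) * Qc j k)
      = (\<Sum>j<d. Pc i j * Abs_clf a0 * Qc j k) + (\<Sum>j<d. Pc i j * Abs_clf a1 * Qc j k) * e1
        + (\<Sum>j<d. Pc i j * Abs_clf a2 * Qc j k) * e2 + (\<Sum>j<d. Pc i j * Abs_clf a3 * Qc j k) * (e1 * e2)"
    by (simp add: sum.distrib sum_distrib_right)
  then show ?thesis
    using assms by (simp add: sum_Pc_Qc_conj quat_def)
qed

lemma Pnext_conj_decomposed:
  assumes "in_C n a0" "in_C n a1" "in_C n a2" "in_C n a3"
    and a: "a = cl_add (cl_add (cl_add a0 (cl_mult a1 (E1 n))) (cl_mult a2 (E2 n))) (cl_mult a3 (mu n))"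
  shows "meq (2 * d) (mmul (2 * d) (mmul (2 * d) (Pnext n r s d P) (mdiag a)) (Pnext' n r s d Q))
      (blk d
        (madd (phi d P Q a0) (msmul s (phi d P Q a1)))
        (msmul r (madd (phi d P Q a2) (msmul s (phi d P Q a3))))
        (msub (phi d P Q a2) (msmul s (phi d P Q a3)))
        (msub (phi d P Q a0) (msmul s (phi d P Q a1))))
    \<and> mat_scalar (2 * d) (mmul (2 * d) (mmul (2 * d) (Pnext n r s d P) (mdiag a)) (Pnext' n r s d Q))"
proof -
  define A where "A = Abs_clf a0 + Abs_clf a1 * e1 + Abs_clf a2 * e2 + Abs_clf a3 * (e1 * e2)"
  have "a = Rep_clf A"
    unfolding a A_def using assms(1-4)
    by (simp add: plus_clf.rep_eq times_clf.rep_eq Rep_Abs_clf_in_C Rep_e1 Rep_e2 mu_def)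
  have entry: "mmul (2 * d) (mmul (2 * d) (Pnext n r s d P) (mdiag a)) (Pnext' n r s d Q) i k
      = cl_scalar (phi_block (d \<le> i) (d \<le> k) (phi d P Q a0 (i mod d) (k mod d) {})
          (phi d P Q a1 (i mod d) (k mod d) {}) (phi d P Q a2 (i mod d) (k mod d) {})
          (phi d P Q a3 (i mod d) (k mod d) {}))"
    if "i < 2 * d" "k < 2 * d" for i k
    using that assms(1-4) unfolding \<open>a = Rep_clf A\<close> Pnext_conj_entry[OF that] A_def
    by (simp add: mod_double_cases sum_Pc_Qc_conj_quat Pblock_conj_quat of_complex.rep_eq)
  have scalar: "phi d P Q y (i mod d) (k mod d) = cl_scalar (phi d P Q y (i mod d) (k mod d) {})"
    if "in_C n y" "i < 2 * d" "k < 2 * d" for y i k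
    using phi_scalar that by (intro cl_is_scalar_eq) (simp add: mat_scalar_def mod_double_cases)
  have "blk d (madd (phi d P Q a0) (msmul s (phi d P Q a1))) (msmul r (madd (phi d P Q a2) (msmul s (phi d P Q a3))))
      (msub (phi d P Q a2) (msmul s (phi d P Q a3))) (msub (phi d P Q a0) (msmul s (phi d P Q a1))) i k
      = cl_scalar (phi_block (d \<le> i) (d \<le> k) (phi d P Q a0 (i mod d) (k mod d) {})
          (phi d P Q a1 (i mod d) (k mod d) {}) (phi d P Q a2 (i mod d) (k mod d) {})
          (phi d P Q a3 (i mod d) (k mod d) {}))"
    if "i < 2 * d" "k < 2 * d" for i k
    by (intro blk_phi_block_entry that scalar assms(1-4))
  with entry show ?thesis
    unfolding meq_def mat_scalar_def by (simp add: cl_is_scalar_def cl_scalar_def)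
qed

end

end

theorem theorem15:
  fixes n :: nat and P Q :: clmat and r s :: complex
  defines "d \<equiv> 2 ^ (n div 2)"
  assumes n_even: "even n"
    and P_in: "mat_in_C n d P" and Q_in: "mat_in_C n d Q"
    and PQ: "is_inverse d P Q"
    and phi_scalar: "\<forall>a. in_C n a \<longrightarrow> mat_scalar d (phi d P Q a)"
    and r_def: "r = (-1) ^ ((n + 1) * (n + 2) div 2)"
    and s_sqrt: "s ^ 2 = r"
  shows "cl_mult (E1 n) (E1 n) = cl_scalar r
       \<and> cl_mult (E2 n) (E2 n) = cl_scalar r
       \<and> mu n = cl_smul (-1) (cl_mult (E2 n) (E1 n))
       \<and> (\<forall>a. in_C (n + 2) a \<longrightarrow>
            (\<exists>a0 a1 a2 a3. in_C n a0 \<and> in_C n a1 \<and> in_C n a2 \<and> in_C n a3 \<and>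
               a = cl_add (cl_add (cl_add a0 (cl_mult a1 (E1 n))) (cl_mult a2 (E2 n)))
                          (cl_mult a3 (mu n))))
       \<and> is_inverse (2 * d) (Pnext n r s d P) (Pnext' n r s d Q)
       \<and> (\<forall>a a0 a1 a2 a3. in_C n a0 \<and> in_C n a1 \<and> in_C n a2 \<and> in_C n a3 \<and>
            a = cl_add (cl_add (cl_add a0 (cl_mult a1 (E1 n))) (cl_mult a2 (E2 n)))
                       (cl_mult a3 (mu n)) \<longrightarrow>
            meq (2 * d) (mmul (2 * d) (mmul (2 * d) (Pnext n r s d P) (mdiag a)) (Pnext' n r s d Q))
              (blk d
                 (madd (phi d P Q a0) (msmul s (phi d P Q a1)))
                 (msmul r (madd (phi d P Q a2) (msmul s (phi d P Q a3))))
                 (msub (phi d P Q a2) (msmul s (phi d P Q a3)))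
                 (msub (phi d P Q a0) (msmul s (phi d P Q a1))))
            \<and> mat_scalar (2 * d) (mmul (2 * d) (mmul (2 * d) (Pnext n r s d P) (mdiag a)) (Pnext' n r s d Q)))"
proof -
  interpret clifford_recursion_step n d P Q r s
    using n_even P_in Q_in PQ r_def s_sqrt by unfold_locales
  have "cl_mult (E1 n) (E1 n) = cl_scalar r" "cl_mult (E2 n) (E2 n) = cl_scalar r"
    unfolding r_def by (rule E1_square E2_square)+
  moreover have "mu n = cl_smul (-1) (cl_mult (E2 n) (E1 n))"
    unfolding E2_E1_anticommute[OF n_even] mu_def by (simp add: cl_smul_def)
  ultimately show ?thesis
    using in_C_add_2_decomposition Pnext_Pnext'_inverse Pnext_conj_decomposed[OF phi_scalar] by blast
qed

end
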